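(* Let $d \ge 1$ and $r \ge 4$ be integers, $\delta_0 \in (0,1)$, $1 \le m \le d$ an integer, and $p_m(x) \in \mathbb{Z}[i][x]$ a polynomial of degree $d-m+1$. Let $N, N_m$ be positive integers with $N \ge N_m$. Let $A\subseteq[N]$ have density $\delta \ge \delta_0$ and let $D$ be a nonempty subset of $[2N^{1/(2d)}]$. Assume the balanced function $f$ of $A$ satisfies \[ \Big| \mathbb{E}_{n\in[N]}\mathbb{E}_{x\in D}\mathbb{E}_{\mathbf{h}\in [N^{1/(8d^r)}]^{d-m}} f(n) f\big(n + p_m(\sigma_{d-m}(x,\mathbf{h}))\big)\Big| \ge \frac{\delta^{2^{m-1}+1}}{2^{3\cdot 2^{m-1}-2}}. \] Define \[ N_0 = \max\left\{N_m,\ \left\lceil\left(\frac{2^{3\cdot 2^{d-1}-1}}{\delta_0^{2^{d-1}+1}}\right)^{4d^r}\right\rceil,\ \left\lceil\left(\frac{2^{3\cdot 2^{d-1}}(2d+2)^{2d+2}2^{2d(2d+1)}M_{p_m}^2}{\delta_0^{2^{d-1}+1}}\right)^4\right\rceil\right\}. \] If $N \ge N_0$, then there exists a polynomial $p_d(x)\in\mathbb{Z}[i][x]$ of degree $1$ with $0 < M_{p_d} \le 2^{d(2d+1)} M_{p_m} N^{1/(8d^{r-2})}$ such that \[ \Big|\mathbb{E}_{n\in[N]}\mathbb{E}_{x\in D} f(n) f(n + p_d(x))\Big| \ge \frac{\delta^{2^{d-1}+1}}{2^{3\cdot 2^{d-1}-2}}. \]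
   Context: For a real number $X\ge 1$, $[X] := \{a+bi \in \mathbb{Z}[i] : a,b \in \mathbb{Z},\ 1 \le a,b \le X\}$; $[X]^j$ is its $j$-fold Cartesian product (for $j=0$ a single empty tuple). For a finite nonempty set $S$, $\mathbb{E}_{x\in S} g(x) := |S|^{-1}\sum_{x\in S} g(x)$. A subset $A\subseteq[N]$ has density $\delta=|A|/N^2$, and its balanced function is $f(n) = \mathbf{1}_A(n) - \delta\mathbf{1}_{[N]}(n)$ for $n\in\mathbb{Z}[i]$. For $x \in \mathbb{Z}[i]$ and $\mathbf{h} = (h_1,\dots,h_j)$, $\sigma_j(x,\mathbf{h}) := x + h_1 + \dots + h_j$. For $p(x) = a_d x^d + \dots + a_0 \in \mathbb{C}[x]$ with $a_d\neq 0$, $M_p := 2\max\{|a_0|,\dots,|a_d|\}$. *)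

theory Defs
  imports "HOL-Analysis.Analysis" "HOL-Computational_Algebra.Polynomial"
begin

definition gauss_int :: "complex set" where
  "gauss_int = {z. Re z \<in> \<int> \<and> Im z \<in> \<int>}"

definition gauss_poly :: "complex poly \<Rightarrow> bool" where
  "gauss_poly p \<longleftrightarrow> (\<forall>i. coeff p i \<in> gauss_int)"

definition gbox :: "real \<Rightarrow> complex set" where
  "gbox X = {Complex (of_int a) (of_int b) | a b :: int.
               1 \<le> a \<and> 1 \<le> b \<and> of_int a \<le> X \<and> of_int b \<le> X}"

definition gbox_pow :: "real \<Rightarrow> nat \<Rightarrow> complex list set" where
  "gbox_pow X j = {hs. length hs = j \<and> set hs \<subseteq> gbox X}"

definition avg :: "'a set \<Rightarrow> ('a \<Rightarrow> real) \<Rightarrow> real" where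
  "avg S g = (\<Sum>x\<in>S. g x) / real (card S)"

definition sigma :: "complex \<Rightarrow> complex list \<Rightarrow> complex" where
  "sigma x hs = x + sum_list hs"

definition balanced_fn :: "complex set \<Rightarrow> nat \<Rightarrow> complex \<Rightarrow> real" where
  "balanced_fn A N n =
     indicator A n - (real (card A) / real N ^ 2) * indicator (gbox (real N)) n"

definition Mp :: "complex poly \<Rightarrow> real" where
  "Mp p = 2 * Max {norm (coeff p i) | i. i \<le> degree p}"

end

theory Submission
  imports Defs
begin

text \<open>
  The polynomial is lowered from degree \<open>d - m + 1\<close> to degree one by \<open>d - m\<close> steps of
  van der Corput differencing. In one step, write the innermost average over the first coordinate
  \<open>h\<close> of the tuple as \<open>W\<close> and apply Cauchy-Schwarz in the other variables: since
  \<open>E f\<^sup>2 \<le> \<delta>\<close>, the squared correlation for \<open>q\<close> is at most \<open>\<delta>\<close> times the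
  average over pairs \<open>(h\<^sub>1, h\<^sub>2) \<in> [X]\<^sup>2\<close> of the correlations of
  \<open>f(n + q(\<sigma> + h\<^sub>1))\<close> with \<open>f(n + q(\<sigma> + h\<^sub>2))\<close>. The diagonal contributes at most
  \<open>\<delta> / |[X]|\<close>. For an off-diagonal pair, translating \<open>n\<close> by the Gaussian integer
  \<open>q(\<sigma> + h\<^sub>1)\<close> costs at most \<open>|q(\<sigma> + h\<^sub>1)| / N\<close>, because \<open>f\<close> is supported on
  \<open>[N]\<close>, and leaves a correlation for \<open>q(\<cdot> + h\<^sub>2) - q(\<cdot> + h\<^sub>1)\<close>, whose degree is one
  less and whose height \<open>M\<^sub>p\<close> is larger by a factor of at most \<open>2(4X)\<^sup>d\<close>.
  The thresholds \<open>c\<^sub>j = \<delta>\<^bsup>2^(j-1)+1\<^esup> / 2\<^bsup>3\<cdot>2^(j-1)-2\<^esup>\<close> satisfy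
  \<open>c\<^sub>j\<^sup>2 / \<delta> = 4 c\<^sub>j\<^sub>+\<^sub>1\<close>, so a correlation above \<open>c\<^sub>j\<close> yields one above
  \<open>c\<^sub>j\<^sub>+\<^sub>1\<close> as long as both error terms together stay below \<open>3 c\<^sub>d\<close>; the lower bound
  \<open>N\<^sub>0\<close> on \<open>N\<close> is exactly what makes them that small.
\<close>

lemma avg_swap: "avg A (\<lambda>a. avg B (\<lambda>b. g a b)) = avg B (\<lambda>b. avg A (\<lambda>a. g a b))"
  unfolding avg_def by (simp add: sum_divide_distrib[symmetric] sum.swap[of _ A B])

lemma avg_mult_left: "avg A (\<lambda>a. c * g a) = c * avg A g"
  unfolding avg_def by (simp add: sum_distrib_left)

lemma avg_product: "avg A g * avg B h = avg A (\<lambda>a. avg B (\<lambda>b. g a * h b))"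
  unfolding avg_def by (simp add: sum_product sum_divide_distrib[symmetric])

lemma avg_Times: "avg A (\<lambda>a. avg B (g a)) = avg (A \<times> B) (case_prod g)"
proof (cases "finite A \<and> finite B")
  case True
  then show ?thesis unfolding avg_def
    by (simp add: sum_divide_distrib[symmetric] sum.cartesian_product card_cartesian_product
        mult.commute)
qed (auto simp: avg_def card_cartesian_product)

lemma avg_reindex: "inj_on h S \<Longrightarrow> avg (h ` S) g = avg S (g \<circ> h)"
  unfolding avg_def by (simp add: sum.reindex card_image)

lemma avg_const: "finite A \<Longrightarrow> A \<noteq> {} \<Longrightarrow> avg A (\<lambda>_. c) = c"
  unfolding avg_def by simp

lemma avg_add_const: "finite A \<Longrightarrow> A \<noteq> {} \<Longrightarrow> avg A (\<lambda>a. g a + c) = avg A g + c"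
  unfolding avg_def by (simp add: sum.distrib add_divide_distrib)

lemma avg_cong: "(\<And>a. a \<in> A \<Longrightarrow> g a = h a) \<Longrightarrow> avg A g = avg A h"
  unfolding avg_def by simp

lemma avg_mono: "(\<And>a. a \<in> A \<Longrightarrow> g a \<le> h a) \<Longrightarrow> avg A g \<le> avg A h"
  unfolding avg_def by (intro divide_right_mono sum_mono) auto

lemma avg_nonneg: "(\<And>a. a \<in> A \<Longrightarrow> 0 \<le> g a) \<Longrightarrow> 0 \<le> avg A g"
  unfolding avg_def by (intro divide_nonneg_nonneg sum_nonneg) auto

lemma avg_Cauchy_Schwarz:
  "(avg A (\<lambda>a. u a * v a))\<^sup>2 \<le> avg A (\<lambda>a. (u a)\<^sup>2) * avg A (\<lambda>a. (v a)\<^sup>2)"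
proof -
  have "(\<Sum>a\<in>A. u a * v a)\<^sup>2 / (real (card A))\<^sup>2
      \<le> (\<Sum>a\<in>A. (u a)\<^sup>2) * (\<Sum>a\<in>A. (v a)\<^sup>2) / (real (card A))\<^sup>2"
    by (intro divide_right_mono Cauchy_Schwarz_ineq_sum) simp
  then show ?thesis unfolding avg_def by (simp add: power_divide power2_eq_square)
qed

lemma exists_off_diagonal_ge:
  fixes g :: "'a \<times> 'a \<Rightarrow> real"
  assumes H: "finite H" and diag: "\<And>h. h \<in> H \<Longrightarrow> g (h, h) \<le> \<delta>"
    and pos: "0 < avg (H \<times> H) g - \<delta> / card H"
  shows "\<exists>h1\<in>H. \<exists>h2\<in>H. h1 \<noteq> h2 \<and> avg (H \<times> H) g - \<delta> / card H \<le> g (h1, h2)"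
proof (rule ccontr)
  define \<mu> where "\<mu> = avg (H \<times> H) g - \<delta> / card H"
  define \<Delta> where "\<Delta> = (\<lambda>h. (h, h)) ` H"
  assume "\<not> ?thesis"
  then have less: "g p < \<mu>" if "p \<in> H \<times> H - \<Delta>" for p
    using that unfolding \<mu>_def \<Delta>_def by fastforce
  have "H \<noteq> {}" using pos by (auto simp: avg_def)
  then have n: "0 < card H" using H by (simp add: card_gt_0_iff)
  have "sum g \<Delta> = (\<Sum>h\<in>H. g (h, h))"
    unfolding \<Delta>_def by (subst sum.reindex) (auto simp: inj_on_def)
  also have "\<dots> \<le> card H * \<delta>"
    using diag sum_mono[of H "\<lambda>h. g (h, h)" "\<lambda>_. \<delta>"] by simp
  finally have sum_diag: "sum g \<Delta> \<le> card H * \<delta>" .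
  have \<Delta>_sub: "\<Delta> \<subseteq> H \<times> H" and card_\<Delta>: "card \<Delta> = card H"
    unfolding \<Delta>_def by (auto simp: card_image inj_on_def)
  have "sum g (H \<times> H - \<Delta>) \<le> card (H \<times> H - \<Delta>) * \<mu>"
    using less sum_mono[of "H \<times> H - \<Delta>" g "\<lambda>_. \<mu>"] by force
  also have "\<dots> < card (H \<times> H) * \<mu>"
  proof -
    have "card (H \<times> H - \<Delta>) = card H * card H - card H"
      using card_Diff_subset[OF finite_subset[OF \<Delta>_sub] \<Delta>_sub] H card_\<Delta>
      by (simp add: card_cartesian_product)
    then have "card (H \<times> H - \<Delta>) < card (H \<times> H)"
      using n by (simp add: card_cartesian_product)
    then show ?thesis using pos unfolding \<mu>_def by (intro mult_strict_right_mono) auto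
  qed
  finally have "sum g (H \<times> H) < card H * \<delta> + card (H \<times> H) * \<mu>"
    using sum_diag sum.subset_diff[OF \<Delta>_sub, of g] H by simp
  also have "\<dots> = sum g (H \<times> H)"
    using n unfolding \<mu>_def avg_def by (simp add: card_cartesian_product field_simps)
  finally show False by simp
qed

lemma gauss_int_add [intro]: "a \<in> gauss_int \<Longrightarrow> b \<in> gauss_int \<Longrightarrow> a + b \<in> gauss_int"
  and gauss_int_diff [intro]: "a \<in> gauss_int \<Longrightarrow> b \<in> gauss_int \<Longrightarrow> a - b \<in> gauss_int"
  and gauss_int_mult [intro]: "a \<in> gauss_int \<Longrightarrow> b \<in> gauss_int \<Longrightarrow> a * b \<in> gauss_int"
  and gauss_int_0 [intro]: "0 \<in> gauss_int"
  and gauss_int_1 [intro]: "1 \<in> gauss_int"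
  and gauss_int_of_nat [intro]: "of_nat n \<in> gauss_int"
  unfolding gauss_int_def by auto

lemma gauss_int_power [intro]: "a \<in> gauss_int \<Longrightarrow> a ^ n \<in> gauss_int"
  by (induction n) auto

lemma gauss_int_sum [intro]: "(\<And>x. x \<in> A \<Longrightarrow> g x \<in> gauss_int) \<Longrightarrow> sum g A \<in> gauss_int"
  by (induction A rule: infinite_finite_induct) auto

lemma gauss_int_sum_list [intro]: "set xs \<subseteq> gauss_int \<Longrightarrow> sum_list xs \<in> gauss_int"
  by (induction xs) auto

lemma norm_gauss_int_ge_1:
  assumes "a \<in> gauss_int" "a \<noteq> 0"
  shows "1 \<le> norm a"
proof -
  obtain x y :: int where xy: "Re a = x" "Im a = y"
    using assms(1) unfolding gauss_int_def by (auto elim!: Ints_cases)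
  have "x \<noteq> 0 \<or> y \<noteq> 0" using assms(2) xy by (auto simp: complex_eq_iff)
  then have "1 \<le> x\<^sup>2 + y\<^sup>2" by (simp add: sum_power2_gt_zero_iff int_one_le_iff_zero_less)
  then have "1 \<le> (Re a)\<^sup>2 + (Im a)\<^sup>2" unfolding xy
    by (metis of_int_1_le_iff of_int_add of_int_power)
  then show ?thesis by (simp add: cmod_def)
qed

definition gauss_pair :: "int \<times> int \<Rightarrow> complex" where
  "gauss_pair p = Complex (of_int (fst p)) (of_int (snd p))"

lemma inj_gauss_pair: "inj gauss_pair"
  unfolding gauss_pair_def inj_def by (auto simp: complex_eq_iff prod_eq_iff)

lemma gbox_eq: "gbox X = gauss_pair ` ({1..\<lfloor>X\<rfloor>} \<times> {1..\<lfloor>X\<rfloor>})"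
  unfolding gbox_def gauss_pair_def by (auto simp: le_floor_iff image_def)

lemma finite_gbox [simp]: "finite (gbox X)"
  unfolding gbox_eq by simp

lemma card_gbox: "card (gbox X) = (nat \<lfloor>X\<rfloor>)\<^sup>2"
proof -
  have "card (gbox X) = card ({1..\<lfloor>X\<rfloor>} \<times> {1..\<lfloor>X\<rfloor>})"
    unfolding gbox_eq by (rule card_image) (meson inj_gauss_pair inj_on_subset subset_UNIV)
  then show ?thesis by (simp add: card_cartesian_product power2_eq_square)
qed

lemma card_gbox_ge: assumes "1 \<le> X" shows "X\<^sup>2 / 4 \<le> real (card (gbox X))"
proof -
  have "1 \<le> \<lfloor>X\<rfloor>" "X - 1 < of_int \<lfloor>X\<rfloor>" using assms by linarith+
  then have "X / 2 \<le> of_int \<lfloor>X\<rfloor>" by linarith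
  then have "(X / 2)\<^sup>2 \<le> (of_int \<lfloor>X\<rfloor>)\<^sup>2" using assms by (intro power_mono) auto
  then show ?thesis using assms by (simp add: card_gbox power_divide)
qed

lemma gbox_nonempty: "1 \<le> X \<Longrightarrow> gbox X \<noteq> {}"
  unfolding gbox_eq by (auto simp: le_floor_iff)

lemma gbox_subset_gauss_int: "gbox X \<subseteq> gauss_int"
  unfolding gbox_def gauss_int_def by auto

lemma norm_gbox_le:
  assumes "z \<in> gbox X" shows "norm z \<le> sqrt 2 * X"
proof -
  obtain a b :: int where z: "z = Complex a b" "1 \<le> a" "1 \<le> b" "a \<le> X" "b \<le> X"
    using assms unfolding gbox_def by auto
  have "(real_of_int a)\<^sup>2 \<le> X\<^sup>2" "(real_of_int b)\<^sup>2 \<le> X\<^sup>2"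
    using z by (auto intro!: power_mono)
  then have "(real_of_int a)\<^sup>2 + (of_int b)\<^sup>2 \<le> 2 * X\<^sup>2" by simp
  then have "sqrt ((real_of_int a)\<^sup>2 + (of_int b)\<^sup>2) \<le> sqrt (2 * X\<^sup>2)"
    by (rule real_sqrt_le_mono)
  also have "\<dots> = sqrt 2 * X" using z by (simp add: real_sqrt_mult)
  finally have "sqrt ((real_of_int a)\<^sup>2 + (of_int b)\<^sup>2) \<le> sqrt 2 * X" .
  then show ?thesis using z by (simp add: cmod_def)
qed

lemma gbox_pow_0: "gbox_pow X 0 = {[]}"
  unfolding gbox_pow_def by auto

lemma gbox_pow_Suc: "gbox_pow X (Suc k) = (\<lambda>(h, hs). h # hs) ` (gbox X \<times> gbox_pow X k)"
  unfolding gbox_pow_def by (auto simp: image_def length_Suc_conv)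

lemma finite_gbox_pow [simp]: "finite (gbox_pow X k)"
  by (induction k) (auto simp: gbox_pow_0 gbox_pow_Suc)

lemma gbox_pow_nonempty: "1 \<le> X \<Longrightarrow> gbox_pow X k \<noteq> {}"
  by (induction k) (auto simp: gbox_pow_0 gbox_pow_Suc gbox_nonempty)

lemma avg_gbox_pow_0: "avg (gbox_pow X 0) g = g []"
  unfolding gbox_pow_0 avg_def by simp

lemma avg_gbox_pow_Suc:
  "avg (gbox_pow X (Suc k)) g = avg (gbox X) (\<lambda>h. avg (gbox_pow X k) (\<lambda>hs. g (h # hs)))"
proof -
  have "inj_on (\<lambda>(h, hs). h # hs) (gbox X \<times> gbox_pow X k)"
    by (auto simp: inj_on_def)
  then show ?thesis
    unfolding gbox_pow_Suc by (simp add: avg_reindex avg_Times comp_def case_prod_unfold)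
qed

lemma norm_sigma_le:
  assumes "x \<in> gbox Y" "hs \<in> gbox_pow X j"
  shows "norm (sigma x hs) \<le> sqrt 2 * (Y + real j * X)"
proof -
  have "norm (sum_list hs) \<le> real j * (sqrt 2 * X)"
    using assms(2)
  proof (induction hs arbitrary: j)
    case (Cons h hs)
    then obtain j' where j: "j = Suc j'" "hs \<in> gbox_pow X j'" "h \<in> gbox X"
      unfolding gbox_pow_def by (cases j) auto
    have "norm (sum_list (h # hs)) \<le> norm h + norm (sum_list hs)"
      by (simp add: norm_triangle_ineq)
    also have "\<dots> \<le> sqrt 2 * X + real j' * (sqrt 2 * X)"
      using norm_gbox_le[OF j(3)] Cons.IH[OF j(2)] by linarith
    finally show ?case using j by (simp add: algebra_simps)
  qed (simp add: gbox_pow_def)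
  then show ?thesis
    using norm_gbox_le[OF assms(1)] norm_triangle_ineq[of x "sum_list hs"]
    unfolding sigma_def by (simp add: algebra_simps)
qed

section \<open>Translating a correlation by a Gaussian integer\<close>

lemma card_shift_out_le:
  fixes a :: int and N :: nat
  shows "card {u \<in> {1..int N}. u - a \<notin> {1..int N}} \<le> nat \<bar>a\<bar>"
proof -
  have "{u \<in> {1..int N}. u - a \<notin> {1..int N}} \<subseteq> {1..a} \<union> {int N + a + 1..int N}"
    by auto
  then have "card {u \<in> {1..int N}. u - a \<notin> {1..int N}} \<le> card ({1..a} \<union> {int N + a + 1..int N})"
    by (intro card_mono) auto
  also have "\<dots> \<le> card {1..a} + card {int N + a + 1..int N}"
    by (rule card_Un_le)
  finally show ?thesis by simp
qed

lemma card_gbox_diff_shift_le: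
  fixes N :: nat
  assumes "a \<in> gauss_int"
  shows "real (card (gbox N - (\<lambda>n. n + a) ` gbox N)) \<le> (\<bar>Re a\<bar> + \<bar>Im a\<bar>) * N"
proof -
  obtain a1 a2 :: int where a: "Re a = a1" "Im a = a2"
    using assms unfolding gauss_int_def by (auto elim!: Ints_cases)
  define I where "I = {1..int N}"
  define B where "B c = {u \<in> I. u - c \<notin> I}" for c
  have G: "gbox N = gauss_pair ` (I \<times> I)" unfolding gbox_eq I_def by simp
  have fin: "finite (B c)" for c
    unfolding B_def I_def by (rule finite_subset[of _ "{1..int N}"]) auto
  have "gbox N - (\<lambda>n. n + a) ` gbox N \<subseteq> gauss_pair ` (B a1 \<times> I \<union> I \<times> B a2)"
  proof
    fix z assume z: "z \<in> gbox N - (\<lambda>n. n + a) ` gbox N"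
    then obtain u v where uv: "z = gauss_pair (u, v)" "u \<in> I" "v \<in> I"
      unfolding G by auto
    have "z = gauss_pair (u - a1, v - a2) + a"
      using uv a by (simp add: gauss_pair_def complex_eq_iff)
    then have "gauss_pair (u - a1, v - a2) \<notin> gbox N" using z by auto
    then have "u \<in> B a1 \<or> v \<in> B a2"
      using uv unfolding G B_def by auto
    then show "z \<in> gauss_pair ` (B a1 \<times> I \<union> I \<times> B a2)" using uv by auto
  qed
  then have "card (gbox N - (\<lambda>n. n + a) ` gbox N) \<le> card (gauss_pair ` (B a1 \<times> I \<union> I \<times> B a2))"
    by (intro card_mono) (auto simp: fin I_def)
  also have "\<dots> \<le> card (B a1 \<times> I \<union> I \<times> B a2)"
    by (rule card_image_le) (auto simp: fin I_def)
  also have "\<dots> \<le> card (B a1) * N + N * card (B a2)"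
    using card_Un_le[of "B a1 \<times> I" "I \<times> B a2"] by (simp add: I_def card_cartesian_product)
  also have "\<dots> \<le> nat \<bar>a1\<bar> * N + N * nat \<bar>a2\<bar>"
    using card_shift_out_le[of N a1] card_shift_out_le[of N a2] unfolding B_def I_def
    by (intro add_mono mult_mono) auto
  finally have "real (card (gbox N - (\<lambda>n. n + a) ` gbox N)) \<le> real (nat \<bar>a1\<bar> * N + N * nat \<bar>a2\<bar>)"
    by (simp only: of_nat_le_iff)
  then show ?thesis using a by (simp add: algebra_simps)
qed

lemma avg_gbox_shift_le:
  fixes f :: "complex \<Rightarrow> real" and N :: nat
  assumes supp: "\<And>z. z \<notin> gbox N \<Longrightarrow> f z = 0" and bound: "\<And>z. \<bar>f z\<bar> \<le> 1"
    and a: "a \<in> gauss_int" and N: "0 < N"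
  shows "avg (gbox N) (\<lambda>n. f (n + a) * f (n + b))
           \<le> avg (gbox N) (\<lambda>n. f n * f (n + (b - a))) + (\<bar>Re a\<bar> + \<bar>Im a\<bar>) / N"
proof -
  define G where "G = gbox N"
  define G' where "G' = (\<lambda>n. n + a) ` G"
  define g where "g m = f m * f (m + (b - a))" for m
  have fin: "finite G" "finite G'" unfolding G_def G'_def by auto
  have "(\<Sum>n\<in>G. f (n + a) * f (n + b)) = (\<Sum>m\<in>G'. g m)"
    unfolding G'_def g_def by (subst sum.reindex) (auto simp: inj_on_def algebra_simps)
  also have "\<dots> = (\<Sum>m\<in>G' \<inter> G. g m)"
    using fin supp unfolding g_def G_def by (intro sum.mono_neutral_right) auto
  also have "\<dots> = (\<Sum>m\<in>G. g m) - (\<Sum>m\<in>G - G'. g m)"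
    using fin by (metis Int_commute sum.Int_Diff add_diff_cancel_right')
  finally have shifted_sum: "(\<Sum>n\<in>G. f (n + a) * f (n + b)) = (\<Sum>m\<in>G. g m) - (\<Sum>m\<in>G - G'. g m)" .
  have "- (\<Sum>m\<in>G - G'. g m) \<le> (\<Sum>m\<in>G - G'. 1)"
  proof -
    have "- g m \<le> 1" for m
      using abs_le_D2[of "g m" 1] bound unfolding g_def abs_mult by (simp add: mult_le_one)
    then show ?thesis unfolding sum_negf[symmetric] by (intro sum_mono)
  qed
  also have "(\<Sum>m\<in>G - G'. 1) \<le> (\<bar>Re a\<bar> + \<bar>Im a\<bar>) * N"
    unfolding G_def G'_def using card_gbox_diff_shift_le[OF a] by simp
  finally have "(\<Sum>n\<in>G. f (n + a) * f (n + b)) \<le> (\<Sum>m\<in>G. g m) + (\<bar>Re a\<bar> + \<bar>Im a\<bar>) * N"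
    unfolding shifted_sum by linarith
  then have "(\<Sum>n\<in>G. f (n + a) * f (n + b)) / (N * N)
      \<le> ((\<Sum>m\<in>G. g m) + (\<bar>Re a\<bar> + \<bar>Im a\<bar>) * N) / (N * N)"
    by (rule divide_right_mono) simp
  also have "\<dots> = (\<Sum>m\<in>G. g m) / (N * N) + (\<bar>Re a\<bar> + \<bar>Im a\<bar>) / N"
    using N by (simp add: field_simps)
  finally show ?thesis
    unfolding avg_def G_def[symmetric] g_def by (simp add: G_def card_gbox power2_eq_square)
qed

lemma avg_gbox_shift_sq_le:
  fixes f :: "complex \<Rightarrow> real" and N :: nat
  assumes supp: "\<And>z. z \<notin> gbox N \<Longrightarrow> f z = 0"
  shows "avg (gbox N) (\<lambda>n. (f (n + a))\<^sup>2) \<le> avg (gbox N) (\<lambda>n. (f n)\<^sup>2)"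
proof -
  have "(\<Sum>n\<in>gbox N. (f (n + a))\<^sup>2) = (\<Sum>m\<in>(\<lambda>n. n + a) ` gbox N. (f m)\<^sup>2)"
    by (subst sum.reindex) (auto simp: inj_on_def)
  also have "\<dots> = (\<Sum>m\<in>(\<lambda>n. n + a) ` gbox N \<inter> gbox N. (f m)\<^sup>2)"
    using supp by (intro sum.mono_neutral_right) auto
  also have "\<dots> \<le> (\<Sum>m\<in>gbox N. (f m)\<^sup>2)"
    by (intro sum_mono2) auto
  finally show ?thesis unfolding avg_def by (simp add: divide_right_mono)
qed

lemma gauss_int_poly: "gauss_poly q \<Longrightarrow> z \<in> gauss_int \<Longrightarrow> poly q z \<in> gauss_int"
  unfolding poly_altdef gauss_poly_def by auto

lemma gauss_int_sigma:
  assumes "x \<in> gauss_int" "hs \<in> gbox_pow X k"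
  shows "sigma x hs \<in> gauss_int"
proof -
  have "set hs \<subseteq> gauss_int"
    using assms(2) gbox_subset_gauss_int unfolding gbox_pow_def by blast
  then show ?thesis unfolding sigma_def using assms(1) by blast
qed

lemma gauss_poly_diff: "gauss_poly p \<Longrightarrow> gauss_poly q \<Longrightarrow> gauss_poly (p - q)"
  unfolding gauss_poly_def by auto

lemma coeff_linear_power:
  "coeff ([:h, 1:] ^ j) i = of_nat (j choose i) * (h :: 'a :: comm_semiring_1) ^ (j - i)"
proof (cases "i \<le> j")
  case False
  then show ?thesis by (simp add: coeff_eq_0 degree_linear_power binomial_eq_0)
qed (simp add: coeff_linear_poly_power)

lemma pcompose_shift_eq_sum:
  "pcompose q [:h, 1:] = (\<Sum>j\<le>degree q. smult (coeff q j) ([:h :: complex, 1:] ^ j))"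
proof -
  have "poly (pcompose q [:h, 1:]) z = poly (\<Sum>j\<le>degree q. smult (coeff q j) ([:h, 1:] ^ j)) z"
    for z
    by (simp add: poly_pcompose poly_altdef[of q] poly_sum)
  then show ?thesis by (intro poly_eq_poly_eq_iff[THEN iffD1] ext)
qed

lemma coeff_pcompose_shift:
  "coeff (pcompose q [:h, 1:]) i
     = (\<Sum>j\<le>degree q. coeff q j * (of_nat (j choose i) * (h :: complex) ^ (j - i)))"
  by (simp add: pcompose_shift_eq_sum coeff_sum coeff_linear_power)

lemma gauss_poly_pcompose_shift:
  "gauss_poly q \<Longrightarrow> h \<in> gauss_int \<Longrightarrow> gauss_poly (pcompose q [:h, 1:])"
  unfolding gauss_poly_def coeff_pcompose_shift by auto

lemma coeff_pcompose_shift_ge_degree: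
  assumes "degree q \<le> i"
  shows "coeff (pcompose q [:(h :: complex), 1:]) i = coeff q i"
proof -
  have "coeff (pcompose q [:h, 1:]) i = (\<Sum>j\<le>degree q. if j = i then coeff q j else 0)"
    unfolding coeff_pcompose_shift using assms by (intro sum.cong) auto
  also have "\<dots> = coeff q i"
    using assms by (cases "i = degree q") (auto simp: coeff_eq_0)
  finally show ?thesis .
qed

lemma coeff_pcompose_shift_subleading:
  assumes "degree q = Suc n"
  shows "coeff (pcompose q [:(h :: complex), 1:]) n = coeff q n + coeff q (Suc n) * of_nat (Suc n) * h"
proof -
  have "coeff (pcompose q [:h, 1:]) n
      = (\<Sum>j<n. coeff q j * (of_nat (j choose n) * h ^ (j - n))) + coeff q n + coeff q (Suc n) * of_nat (Suc n) * h"
    unfolding coeff_pcompose_shift assms by (simp add: lessThan_Suc_atMost[symmetric])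
  also have "(\<Sum>j<n. coeff q j * (of_nat (j choose n) * h ^ (j - n))) = 0"
    by (intro sum.neutral) auto
  finally show ?thesis by simp
qed

lemma sum_binomial_shifted_le:
  fixes R :: real assumes "0 \<le> R"
  shows "(\<Sum>j\<le>n. real (j choose i) * R ^ (j - i)) \<le> (1 + R) ^ n"
proof (cases "i \<le> n")
  case False
  then have "(\<Sum>j\<le>n. real (j choose i) * R ^ (j - i)) = 0" by (intro sum.neutral) auto
  then show ?thesis using assms by simp
next
  case True
  have "(\<Sum>j\<le>n. real (j choose i) * R ^ (j - i)) = (\<Sum>j\<in>{i..n}. real (j choose i) * R ^ (j - i))"
    by (intro sum.mono_neutral_right) auto
  also have "\<dots> = (\<Sum>k\<le>n - i. real ((i + k) choose k) * R ^ k)"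
    using True by (intro sum.reindex_bij_witness[of _ "\<lambda>k. i + k" "\<lambda>j. j - i"])
      (auto simp: binomial_symmetric[of i, simplified])
  also have "\<dots> \<le> (\<Sum>k\<le>n - i. real (n choose k) * R ^ k)"
    using True assms by (intro sum_mono mult_right_mono) (auto intro: binomial_right_mono)
  also have "\<dots> \<le> (\<Sum>k\<le>n. real (n choose k) * R ^ k)"
    using assms by (intro sum_mono2) auto
  also have "\<dots> = (R + 1) ^ n" by (simp add: binomial_ring[of R 1])
  finally show ?thesis by (simp add: add.commute)
qed

lemma norm_coeff_le_Mp: "norm (coeff p i) \<le> Mp p / 2"
proof -
  have fin: "finite {norm (coeff p i) | i. i \<le> degree p}" by simp
  show ?thesis
  proof (cases "i \<le> degree p")
    case True
    then have "norm (coeff p i) \<le> Max {norm (coeff p i) | i. i \<le> degree p}"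
      by (intro Max_ge[OF fin]) auto
    then show ?thesis unfolding Mp_def by simp
  next
    case False
    have "0 \<le> norm (coeff p 0)" by simp
    also have "\<dots> \<le> Max {norm (coeff p i) | i. i \<le> degree p}" by (intro Max_ge[OF fin]) auto
    finally show ?thesis using False unfolding Mp_def by (simp add: coeff_eq_0)
  qed
qed

lemma Mp_nonneg: "0 \<le> Mp p"
  using norm_coeff_le_Mp[of p 0] norm_ge_zero[of "coeff p 0"] by linarith

lemma Mp_le: "(\<And>i. i \<le> degree p \<Longrightarrow> norm (coeff p i) \<le> C) \<Longrightarrow> Mp p \<le> 2 * C"
  unfolding Mp_def by (auto intro!: Max.boundedI)

lemma Mp_pos:
  assumes "p \<noteq> 0" shows "0 < Mp p"
proof -
  have "0 < norm (lead_coeff p)" using assms by simp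
  then show ?thesis using norm_coeff_le_Mp[of p "degree p"] by linarith
qed

lemma Mp_ge_2: "gauss_poly p \<Longrightarrow> p \<noteq> 0 \<Longrightarrow> 2 \<le> Mp p"
  using norm_coeff_le_Mp[of p "degree p"] norm_gauss_int_ge_1[of "lead_coeff p"]
  unfolding gauss_poly_def by auto

lemma norm_poly_le_Mp:
  assumes "norm z \<le> R" "1 \<le> R"
  shows "norm (poly p z) \<le> real (degree p + 1) * (Mp p / 2) * R ^ degree p"
proof -
  have "norm (poly p z) \<le> (\<Sum>i\<le>degree p. norm (coeff p i * z ^ i))"
    unfolding poly_altdef by (rule norm_sum)
  also have "\<dots> \<le> (\<Sum>i\<le>degree p. (Mp p / 2) * R ^ degree p)"
  proof (intro sum_mono)
    fix i assume "i \<in> {..degree p}"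
    then have "norm z ^ i \<le> R ^ degree p"
      using assms power_mono[of "norm z" R i] power_increasing[of i "degree p" R] by auto
    then show "norm (coeff p i * z ^ i) \<le> (Mp p / 2) * R ^ degree p"
      unfolding norm_mult norm_power by (intro mult_mono norm_coeff_le_Mp) (auto simp: Mp_nonneg)
  qed
  finally show ?thesis by simp
qed

lemma norm_poly_sigma_le:
  assumes x: "x \<in> gbox (2 * Y)" and hs: "hs \<in> gbox_pow X j" and "j < d" "1 \<le> X" "X \<le> Y"
    and deg: "degree q \<le> d"
  shows "norm (poly q (sigma x hs)) \<le> (real d + 1) * (Mp q / 2) * ((2 * real d + 2) * Y) ^ d"
proof -
  have "sqrt 2 \<le> 2" by (simp add: real_sqrt_le_iff')
  have "real j * X \<le> (real d - 1) * Y"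
    using assms by (intro mult_mono) auto
  then have "2 * Y + real j * X \<le> (real d + 1) * Y" by (simp add: algebra_simps)
  then have "sqrt 2 * (2 * Y + real j * X) \<le> 2 * ((real d + 1) * Y)"
    using \<open>sqrt 2 \<le> 2\<close> assms by (intro mult_mono) auto
  then have R: "norm (sigma x hs) \<le> (2 * real d + 2) * Y"
    using norm_sigma_le[OF x hs] by (simp add: algebra_simps)
  have R1: "1 \<le> (2 * real d + 2) * Y" using mult_mono[of 1 "2 * real d + 2" 1 Y] assms by (simp add: algebra_simps)
  have "norm (poly q (sigma x hs)) \<le> (degree q + 1) * (Mp q / 2) * ((2 * real d + 2) * Y) ^ degree q"
    by (rule norm_poly_le_Mp[OF R R1])
  also have "\<dots> \<le> (real d + 1) * (Mp q / 2) * ((2 * real d + 2) * Y) ^ d"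
    using deg R1 Mp_nonneg[of q]
    by (intro mult_mono power_increasing) (auto simp: one_le_mult_iff)
  finally show ?thesis .
qed

lemma norm_coeff_pcompose_shift_le:
  assumes "norm h \<le> R"
  shows "norm (coeff (pcompose q [:h, 1:]) i) \<le> (Mp q / 2) * (1 + R) ^ degree q"
proof -
  have R: "0 \<le> R" using assms norm_ge_zero order_trans by blast
  have "norm (coeff (pcompose q [:h, 1:]) i)
      \<le> (\<Sum>j\<le>degree q. norm (coeff q j * (of_nat (j choose i) * h ^ (j - i))))"
    unfolding coeff_pcompose_shift by (rule norm_sum)
  also have "\<dots> \<le> (\<Sum>j\<le>degree q. (Mp q / 2) * (real (j choose i) * R ^ (j - i)))"
    using assms power_mono[of "norm h" R] unfolding norm_mult norm_power norm_of_nat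
    by (intro sum_mono mult_mono norm_coeff_le_Mp) (auto simp: R Mp_nonneg)
  also have "\<dots> \<le> (Mp q / 2) * (1 + R) ^ degree q"
    unfolding sum_distrib_left[symmetric]
    by (intro mult_left_mono sum_binomial_shifted_le R) (simp add: Mp_nonneg)
  finally show ?thesis .
qed

definition difference_poly :: "complex poly \<Rightarrow> complex \<Rightarrow> complex \<Rightarrow> complex poly" where
  "difference_poly q h1 h2 = pcompose q [:h2, 1:] - pcompose q [:h1, 1:]"

lemma poly_difference_poly: "poly (difference_poly q h1 h2) z = poly q (h2 + z) - poly q (h1 + z)"
  unfolding difference_poly_def by (simp add: poly_pcompose)

lemma gauss_poly_difference_poly:
  "gauss_poly q \<Longrightarrow> h1 \<in> gauss_int \<Longrightarrow> h2 \<in> gauss_int \<Longrightarrow> gauss_poly (difference_poly q h1 h2)"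
  unfolding difference_poly_def by (intro gauss_poly_diff gauss_poly_pcompose_shift)

lemma degree_difference_poly:
  assumes "degree q = Suc n" "h1 \<noteq> h2"
  shows "degree (difference_poly q h1 h2) = n"
proof (rule antisym)
  show "degree (difference_poly q h1 h2) \<le> n"
    using assms(1) by (intro degree_le) (simp add: difference_poly_def coeff_pcompose_shift_ge_degree)
next
  have "coeff q (Suc n) \<noteq> 0" using assms(1) by (metis degree_0 leading_coeff_0_iff nat.distinct(1))
  moreover have "coeff (difference_poly q h1 h2) n = coeff q (Suc n) * of_nat (Suc n) * (h2 - h1)"
    unfolding difference_poly_def using assms(1)
    by (simp add: coeff_pcompose_shift_subleading algebra_simps)
  ultimately have "coeff (difference_poly q h1 h2) n \<noteq> 0"
    using assms(2) by (simp del: of_nat_Suc)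
  then show "n \<le> degree (difference_poly q h1 h2)" by (rule le_degree)
qed

lemma Mp_difference_poly_le:
  assumes "norm h1 \<le> R" "norm h2 \<le> R"
  shows "Mp (difference_poly q h1 h2) \<le> 2 * (1 + R) ^ degree q * Mp q"
proof -
  have "norm (coeff (difference_poly q h1 h2) i) \<le> (1 + R) ^ degree q * Mp q" for i
  proof -
    have "norm (coeff (difference_poly q h1 h2) i)
        \<le> norm (coeff (pcompose q [:h2, 1:]) i) + norm (coeff (pcompose q [:h1, 1:]) i)"
      unfolding difference_poly_def by (simp add: norm_triangle_ineq4)
    also have "\<dots> \<le> (Mp q / 2) * (1 + R) ^ degree q + (Mp q / 2) * (1 + R) ^ degree q"
      by (intro add_mono norm_coeff_pcompose_shift_le assms)
    finally show ?thesis by (simp add: mult.commute)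
  qed
  then show ?thesis using Mp_le by (metis mult.assoc)
qed

lemma Mp_difference_poly_gbox_le:
  assumes "1 \<le> X" "degree q \<le> d" "h1 \<in> gbox X" "h2 \<in> gbox X"
  shows "Mp (difference_poly q h1 h2) \<le> 2 * (4 * X) ^ d * Mp q"
proof -
  have "sqrt 2 \<le> 2" by (simp add: real_sqrt_le_iff')
  then have "sqrt 2 * X \<le> 2 * X" using assms(1) by (intro mult_right_mono) auto
  then have "1 + sqrt 2 * X \<le> 4 * X" using assms(1) by linarith
  then have "(1 + sqrt 2 * X) ^ degree q \<le> (4 * X) ^ d"
    using assms(1,2) power_mono[of "1 + sqrt 2 * X" "4 * X" "degree q"]
      power_increasing[of "degree q" d "4 * X"] by auto
  moreover have "Mp (difference_poly q h1 h2) \<le> 2 * (1 + sqrt 2 * X) ^ degree q * Mp q"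
    using assms(3,4) by (intro Mp_difference_poly_le norm_gbox_le)
  ultimately show ?thesis using Mp_nonneg[of q] by (smt (verit) mult_right_mono)
qed

lemma growth_power_le:
  fixes X :: real
  assumes "1 \<le> X" "s < d"
  shows "(2 * (4 * X) ^ d) ^ s \<le> 2 ^ (d * (2 * d + 1)) * X ^ d\<^sup>2"
proof -
  have "(4::real) ^ (d * s) = 2 ^ (2 * (d * s))" by (simp add: power_mult)
  then have "(2 * (4 * X) ^ d) ^ s = 2 ^ (s + 2 * (d * s)) * X ^ (d * s)"
    by (simp add: power_mult_distrib power_add flip: power_mult)
  also have "\<dots> \<le> 2 ^ (d * (2 * d + 1)) * X ^ d\<^sup>2"
  proof (intro mult_mono power_increasing)
    have "d * s \<le> d * d" using assms(2) by simp
    moreover have "d * (2 * d + 1) = d + 2 * (d * d)" by (simp add: algebra_simps)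
    ultimately show "s + 2 * (d * s) \<le> d * (2 * d + 1)" "d * s \<le> d\<^sup>2"
      using assms(2) by (linarith, simp add: power2_eq_square)
  qed (use assms in auto)
  finally show ?thesis .
qed

definition corr_threshold :: "real \<Rightarrow> nat \<Rightarrow> real" where
  "corr_threshold \<delta> j = \<delta> ^ (2 ^ (j - 1) + 1) / 2 ^ (3 * 2 ^ (j - 1) - 2)"

lemma corr_threshold_pos: "0 < \<delta> \<Longrightarrow> 0 < corr_threshold \<delta> j"
  unfolding corr_threshold_def by simp

lemma corr_threshold_sq:
  assumes "1 \<le> j" "0 < \<delta>"
  shows "(corr_threshold \<delta> j)\<^sup>2 / \<delta> = 4 * corr_threshold \<delta> (Suc j)"
proof -
  obtain e where e: "2 ^ (j - 1) = Suc e" using not0_implies_Suc[of "2 ^ (j - 1)"] by auto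
  then have e': "2 ^ (Suc j - 1) = Suc (Suc (2 * e))"
    using assms(1) by (cases j) auto
  have "3 * Suc e - 2 = Suc (3 * e)" "3 * Suc (Suc (2 * e)) - 2 = Suc (Suc (Suc (Suc (6 * e))))"
    by simp_all
  moreover have "\<delta> ^ (e * 2) = \<delta> ^ e * \<delta> ^ e" "(2::real) ^ (e * 6) = 2 ^ (e * 3) * 2 ^ (e * 3)"
    by (simp_all add: mult_2_right flip: power_add)
  ultimately show ?thesis
    unfolding corr_threshold_def e e' using assms(2)
    by (simp add: power2_eq_square field_simps power_add flip: power_mult)
qed

lemma corr_threshold_le:
  assumes "0 < \<delta>" "\<delta> \<le> 1" shows "corr_threshold \<delta> j \<le> \<delta>"
proof -
  have "corr_threshold \<delta> j \<le> \<delta> ^ (2 ^ (j - 1) + 1) / 1"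
    unfolding corr_threshold_def using assms by (intro divide_left_mono) auto
  also have "\<dots> \<le> \<delta> ^ 1" unfolding div_by_1 using assms by (intro power_decreasing) auto
  finally show ?thesis by simp
qed

lemma corr_threshold_antimono:
  assumes "1 \<le> i" "i \<le> j" "0 < \<delta>" "\<delta> \<le> 1"
  shows "corr_threshold \<delta> j \<le> corr_threshold \<delta> i"
  using assms(2)
proof (induction j rule: dec_induct)
  case (step j)
  have "corr_threshold \<delta> (Suc j) = corr_threshold \<delta> j * (corr_threshold \<delta> j / (4 * \<delta>))"
    using corr_threshold_sq[of j \<delta>] step.hyps assms by (simp add: field_simps power2_eq_square)
  also have "\<dots> \<le> corr_threshold \<delta> j"
    using corr_threshold_le[of \<delta> j] corr_threshold_pos[of \<delta> j] assms
    by (intro mult_left_le) (auto simp: field_simps)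
  finally show ?case using step.IH by linarith
qed simp

section \<open>Van der Corput differencing\<close>

locale correlation_setting =
  fixes f :: "complex \<Rightarrow> real" and N :: nat and \<delta> :: real and D :: "complex set" and X :: real
  assumes f_outside: "\<And>z. z \<notin> gbox N \<Longrightarrow> f z = 0"
    and abs_f_le: "\<And>z. \<bar>f z\<bar> \<le> 1"
    and N_pos: "0 < N"
    and avg_f_sq_le: "avg (gbox N) (\<lambda>n. (f n)\<^sup>2) \<le> \<delta>" and \<delta>_pos: "0 < \<delta>"
    and finite_D: "finite D" and D_nonempty: "D \<noteq> {}" and D_gauss_int: "D \<subseteq> gauss_int"
    and X_ge_1: "1 \<le> X"
begin

definition corr :: "nat \<Rightarrow> complex poly \<Rightarrow> real" where
  "corr k q = avg (gbox N) (\<lambda>n. avg D (\<lambda>x. avg (gbox_pow X k) (\<lambda>hs.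
      f n * f (n + poly q (sigma x hs)))))"

definition pair_corr :: "nat \<Rightarrow> complex poly \<Rightarrow> complex \<Rightarrow> complex \<Rightarrow> real" where
  "pair_corr k q h1 h2 = avg D (\<lambda>x. avg (gbox_pow X k) (\<lambda>hs. avg (gbox N) (\<lambda>n.
      f (n + poly q (sigma x (h1 # hs))) * f (n + poly q (sigma x (h2 # hs))))))"

lemma corr_Suc_sq_le:
  "(corr (Suc k) q)\<^sup>2 \<le> \<delta> * avg (gbox X \<times> gbox X) (\<lambda>(h1, h2). pair_corr k q h1 h2)"
proof -
  define G where "G = gbox N"
  define H where "H = gbox X"
  define P where "P = gbox_pow X k"
  define K where "K n x hs h1 h2 = f (n + poly q (sigma x (h1 # hs))) * f (n + poly q (sigma x (h2 # hs)))"
    for n x hs h1 h2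
  define W where "W n x hs = avg H (\<lambda>h. f (n + poly q (sigma x (h # hs))))" for n x hs
  define u where "u p = f (fst p)" for p :: "complex \<times> complex \<times> complex list"
  define v where "v p = W (fst p) (fst (snd p)) (snd (snd p))" for p :: "complex \<times> complex \<times> complex list"
  have finite_nonempty: "finite (D \<times> P)" "D \<times> P \<noteq> {}"
    using finite_D D_nonempty gbox_pow_nonempty[OF X_ge_1] unfolding P_def by auto
  have "corr (Suc k) q = avg G (\<lambda>n. avg D (\<lambda>x. avg P (\<lambda>hs. f n * W n x hs)))"
    unfolding corr_def avg_gbox_pow_Suc G_def H_def P_def W_def avg_mult_left
    by (simp only: avg_swap[of "gbox X"])
  also have "\<dots> = avg (G \<times> (D \<times> P)) (\<lambda>p. u p * v p)"
    unfolding u_def v_def by (simp only: avg_Times) (simp add: case_prod_unfold)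
  finally have "(corr (Suc k) q)\<^sup>2
      \<le> avg (G \<times> (D \<times> P)) (\<lambda>p. (u p)\<^sup>2) * avg (G \<times> (D \<times> P)) (\<lambda>p. (v p)\<^sup>2)"
    using avg_Cauchy_Schwarz by metis
  moreover have "avg (G \<times> (D \<times> P)) (\<lambda>p. (u p)\<^sup>2) = avg G (\<lambda>n. (f n)\<^sup>2)"
    unfolding u_def using avg_Times[of G "D \<times> P" "\<lambda>n _. (f n)\<^sup>2", symmetric] finite_nonempty
    by (simp add: avg_const case_prod_unfold)
  moreover have "0 \<le> avg (G \<times> (D \<times> P)) (\<lambda>p. (v p)\<^sup>2)"
    by (intro avg_nonneg) simp
  moreover have "avg (G \<times> (D \<times> P)) (\<lambda>p. (v p)\<^sup>2) = avg G (\<lambda>n. avg D (\<lambda>x. avg P (\<lambda>hs. (W n x hs)\<^sup>2)))"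
    unfolding v_def by (simp only: avg_Times) (simp add: case_prod_unfold)
  moreover have "\<dots> = avg G (\<lambda>n. avg D (\<lambda>x. avg P (\<lambda>hs. avg (H \<times> H) (\<lambda>(h1, h2). K n x hs h1 h2))))"
    unfolding W_def K_def power2_eq_square avg_product by (simp only: avg_Times)
  moreover have "\<dots> = avg (H \<times> H) (\<lambda>(h1, h2). pair_corr k q h1 h2)"
    unfolding pair_corr_def K_def G_def H_def P_def
    by (simp only: avg_swap[of _ "gbox X \<times> gbox X"]) (simp add: avg_swap[of "gbox N"] case_prod_unfold)
  ultimately show ?thesis
    using avg_f_sq_le mult_right_mono[of "avg G (\<lambda>n. (f n)\<^sup>2)" \<delta>] unfolding G_def H_def
    by (smt (verit))
qed

lemma pair_corr_diag_le: "pair_corr k q h h \<le> \<delta>"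
proof -
  have "pair_corr k q h h \<le> avg D (\<lambda>x. avg (gbox_pow X k) (\<lambda>hs. avg (gbox N) (\<lambda>n. (f n)\<^sup>2)))"
    unfolding pair_corr_def power2_eq_square[symmetric]
    by (intro avg_mono avg_gbox_shift_sq_le f_outside)
  also have "\<dots> = avg (gbox N) (\<lambda>n. (f n)\<^sup>2)"
    using finite_D D_nonempty gbox_pow_nonempty[OF X_ge_1] by (simp add: avg_const)
  finally show ?thesis using avg_f_sq_le by linarith
qed

lemma pair_corr_le_corr_difference_poly:
  assumes q: "gauss_poly q" and h: "h1 \<in> gbox X" "h2 \<in> gbox X"
    and B: "\<And>x hs. x \<in> D \<Longrightarrow> hs \<in> gbox_pow X (Suc k) \<Longrightarrow> norm (poly q (sigma x hs)) \<le> B"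
  shows "pair_corr k q h1 h2 \<le> corr k (difference_poly q h1 h2) + 2 * B / N"
proof -
  define q' where "q' = difference_poly q h1 h2"
  have "pair_corr k q h1 h2
      \<le> avg D (\<lambda>x. avg (gbox_pow X k) (\<lambda>hs. avg (gbox N) (\<lambda>n. f n * f (n + poly q' (sigma x hs))) + 2 * B / N))"
    unfolding pair_corr_def
  proof (intro avg_mono)
    fix x hs assume x: "x \<in> D" and hs: "hs \<in> gbox_pow X k"
    define a where "a h = poly q (sigma x (h # hs))" for h
    have mem: "h1 # hs \<in> gbox_pow X (Suc k)" using hs h unfolding gbox_pow_def by auto
    have a1: "a h1 \<in> gauss_int"
      unfolding a_def using x mem D_gauss_int by (intro gauss_int_poly[OF q] gauss_int_sigma) auto
    have "\<bar>Re (a h1)\<bar> + \<bar>Im (a h1)\<bar> \<le> 2 * B"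
      using abs_Re_le_cmod[of "a h1"] abs_Im_le_cmod[of "a h1"] B[OF x mem] unfolding a_def by linarith
    then have "(\<bar>Re (a h1)\<bar> + \<bar>Im (a h1)\<bar>) / N \<le> 2 * B / N" by (simp add: divide_right_mono)
    moreover have "a h2 - a h1 = poly q' (sigma x hs)"
      unfolding a_def q'_def poly_difference_poly sigma_def by (simp add: algebra_simps)
    ultimately show "avg (gbox N) (\<lambda>n. f (n + a h1) * f (n + a h2))
        \<le> avg (gbox N) (\<lambda>n. f n * f (n + poly q' (sigma x hs))) + 2 * B / N"
      using avg_gbox_shift_le[where f = f and N = N and b = "a h2", OF f_outside abs_f_le a1 N_pos] by simp
  qed
  also have "\<dots> = corr k q' + 2 * B / N"
    using finite_D D_nonempty gbox_pow_nonempty[OF X_ge_1]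
    by (simp add: avg_add_const corr_def avg_swap[of "gbox N"])
  finally show ?thesis unfolding q'_def .
qed

lemma differencing_step:
  assumes q: "gauss_poly q"
    and B: "\<And>x hs. x \<in> D \<Longrightarrow> hs \<in> gbox_pow X (Suc k) \<Longrightarrow> norm (poly q (sigma x hs)) \<le> B"
    and c: "0 \<le> c" "c \<le> \<bar>corr (Suc k) q\<bar>"
    and pos: "0 < c\<^sup>2 / \<delta> - \<delta> / card (gbox X) - 2 * B / N"
  shows "\<exists>h1\<in>gbox X. \<exists>h2\<in>gbox X. h1 \<noteq> h2 \<and>
           c\<^sup>2 / \<delta> - \<delta> / card (gbox X) - 2 * B / N \<le> corr k (difference_poly q h1 h2)"
proof -
  define T where "T = avg (gbox X \<times> gbox X) (\<lambda>(h1, h2). pair_corr k q h1 h2)"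
  obtain x hs where "x \<in> D" "hs \<in> gbox_pow X (Suc k)"
    using D_nonempty gbox_pow_nonempty[OF X_ge_1] by blast
  then have "0 \<le> B" using B norm_ge_zero order_trans by blast
  have "c\<^sup>2 \<le> (corr (Suc k) q)\<^sup>2" using c by (metis abs_le_square_iff abs_of_nonneg)
  also have "\<dots> \<le> \<delta> * T" unfolding T_def by (rule corr_Suc_sq_le)
  finally have "c\<^sup>2 / \<delta> \<le> T" using \<delta>_pos by (simp add: field_simps mult.commute)
  moreover have "0 \<le> 2 * B / N" using \<open>0 \<le> B\<close> by simp
  ultimately have "0 < T - \<delta> / card (gbox X)" using pos by linarith
  then obtain h1 h2 where h: "h1 \<in> gbox X" "h2 \<in> gbox X" "h1 \<noteq> h2"
      and ge: "T - \<delta> / card (gbox X) \<le> pair_corr k q h1 h2"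
    using exists_off_diagonal_ge[of "gbox X" "\<lambda>(h1, h2). pair_corr k q h1 h2" \<delta>] pair_corr_diag_le
    unfolding T_def by auto
  have "pair_corr k q h1 h2 \<le> corr k (difference_poly q h1 h2) + 2 * B / N"
    by (rule pair_corr_le_corr_difference_poly[OF q h(1,2) B])
  then show ?thesis using h ge \<open>c\<^sup>2 / \<delta> \<le> T\<close> by (intro bexI[of _ h1] bexI[of _ h2]) auto
qed

lemma differencing_step_threshold:
  assumes "1 \<le> j" and q: "gauss_poly q"
    and B: "\<And>x hs. x \<in> D \<Longrightarrow> hs \<in> gbox_pow X (Suc k) \<Longrightarrow> norm (poly q (sigma x hs)) \<le> B"
    and corr_q: "corr_threshold \<delta> j \<le> \<bar>corr (Suc k) q\<bar>"
    and err: "\<delta> / card (gbox X) + 2 * B / N \<le> 3 * corr_threshold \<delta> (Suc j)"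
  shows "\<exists>h1\<in>gbox X. \<exists>h2\<in>gbox X. h1 \<noteq> h2 \<and>
           corr_threshold \<delta> (Suc j) \<le> corr k (difference_poly q h1 h2)"
proof -
  define c where "c = corr_threshold \<delta> j"
  have key: "corr_threshold \<delta> (Suc j) \<le> c\<^sup>2 / \<delta> - \<delta> / card (gbox X) - 2 * B / N"
    using corr_threshold_sq[OF assms(1) \<delta>_pos] err unfolding c_def by linarith
  moreover have "0 \<le> c" "0 < c\<^sup>2 / \<delta> - \<delta> / card (gbox X) - 2 * B / N"
    using key corr_threshold_pos[OF \<delta>_pos, of j] corr_threshold_pos[OF \<delta>_pos, of "Suc j"]
    unfolding c_def by auto
  ultimately show ?thesis
    using differencing_step[OF q B _ corr_q[folded c_def]] by fastforce
qed

lemma descend_degree: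
  assumes F: "1 \<le> F" and M: "0 \<le> M" and "s < d" and \<delta>_le_1: "\<delta> \<le> 1"
    and bound: "\<And>q x j hs. degree q \<le> d \<Longrightarrow> Mp q \<le> M * F ^ s \<Longrightarrow> x \<in> D \<Longrightarrow> j \<le> s \<Longrightarrow>
                  hs \<in> gbox_pow X j \<Longrightarrow> norm (poly q (sigma x hs)) \<le> B"
    and growth: "\<And>q h1 h2. degree q \<le> d \<Longrightarrow> h1 \<in> gbox X \<Longrightarrow> h2 \<in> gbox X \<Longrightarrow>
                  Mp (difference_poly q h1 h2) \<le> F * Mp q"
    and err: "\<delta> / card (gbox X) + 2 * B / N \<le> 3 * corr_threshold \<delta> d"
  shows "k \<le> s \<Longrightarrow> gauss_poly q \<Longrightarrow> degree q = Suc k \<Longrightarrow> Mp q \<le> M * F ^ (s - k) \<Longrightarrow>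
         corr_threshold \<delta> (d - k) \<le> \<bar>corr k q\<bar> \<Longrightarrow>
         \<exists>p. gauss_poly p \<and> degree p = 1 \<and> Mp p \<le> M * F ^ s \<and> corr_threshold \<delta> d \<le> \<bar>corr 0 p\<bar>"
proof (induction k arbitrary: q)
  case 0
  then show ?case by auto
next
  case (Suc k)
  have j: "1 \<le> d - Suc k" and Suc_j: "Suc (d - Suc k) = d - k" using Suc.prems(1) \<open>s < d\<close> by auto
  have "Mp q \<le> M * F ^ s"
    using Suc.prems(4) M F power_increasing[of "s - Suc k" s F] by (meson diff_le_self mult_left_mono order_trans)
  moreover have deg: "degree q \<le> d" using Suc.prems(1,3) \<open>s < d\<close> by simp
  ultimately have B: "norm (poly q (sigma x hs)) \<le> B" if "x \<in> D" "hs \<in> gbox_pow X (Suc k)" for x hs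
    using bound that Suc.prems(1) by blast
  have "corr_threshold \<delta> d \<le> corr_threshold \<delta> (d - k)"
    using j \<delta>_pos \<delta>_le_1 by (intro corr_threshold_antimono) auto
  then have "\<delta> / card (gbox X) + 2 * B / N \<le> 3 * corr_threshold \<delta> (Suc (d - Suc k))"
    using err unfolding Suc_j by linarith
  then obtain h1 h2 where h: "h1 \<in> gbox X" "h2 \<in> gbox X" "h1 \<noteq> h2"
      and corr_ge: "corr_threshold \<delta> (d - k) \<le> corr k (difference_poly q h1 h2)"
    using differencing_step_threshold[OF j Suc.prems(2) B Suc.prems(5)] unfolding Suc_j by blast
  define q' where "q' = difference_poly q h1 h2"
  have "gauss_poly q'"
    unfolding q'_def using gauss_poly_difference_poly[OF Suc.prems(2)] h gbox_subset_gauss_int by blast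
  moreover have "degree q' = Suc k"
    unfolding q'_def using degree_difference_poly[OF Suc.prems(3) h(3)] .
  moreover have "Mp q' \<le> M * F ^ (s - k)"
  proof -
    have "Mp q' \<le> F * (M * F ^ (s - Suc k))"
      unfolding q'_def using order_trans[OF growth[OF deg h(1,2)] mult_left_mono[OF Suc.prems(4)]] F
      by simp
    also have "\<dots> = M * F ^ (s - k)"
      using Suc.prems(1) by (simp add: Suc_diff_Suc[symmetric])
    finally show ?thesis .
  qed
  moreover have "corr_threshold \<delta> (d - k) \<le> \<bar>corr k q'\<bar>"
    using corr_ge unfolding q'_def by linarith
  ultimately show ?case using Suc.IH Suc.prems(1) by simp
qed

lemma corr_0: "corr 0 p = avg (gbox N) (\<lambda>n. avg D (\<lambda>x. f n * f (n + poly p x)))"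
  unfolding corr_def avg_gbox_pow_0 sigma_def by simp

lemma descend_to_linear:
  assumes "s < d" "\<delta> \<le> 1" and q: "gauss_poly q" "degree q = Suc s"
    and corr_q: "corr_threshold \<delta> (d - s) \<le> \<bar>corr s q\<bar>"
    and Y: "X \<le> Y" "D \<subseteq> gbox (2 * Y)"
    and err: "\<delta> / card (gbox X)
        + (real d + 1) * Mp q * (2 * (4 * X) ^ d) ^ s * ((2 * real d + 2) * Y) ^ d / N
        \<le> 3 * corr_threshold \<delta> d"
  shows "\<exists>p. gauss_poly p \<and> degree p = 1 \<and> 0 < Mp p \<and>
           Mp p \<le> 2 ^ (d * (2 * d + 1)) * Mp q * X ^ d\<^sup>2 \<and>
           corr_threshold \<delta> d \<le> \<bar>avg (gbox N) (\<lambda>n. avg D (\<lambda>x. f n * f (n + poly p x)))\<bar>"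
proof -
  define F where "F = 2 * (4 * X) ^ d"
  define B where "B = (real d + 1) * (Mp q * F ^ s / 2) * ((2 * real d + 2) * Y) ^ d"
  have err_B: "\<delta> / card (gbox X) + 2 * B / N \<le> 3 * corr_threshold \<delta> d"
    using err unfolding B_def F_def by (simp add: mult_ac)
  have "1 \<le> F" unfolding F_def using X_ge_1 one_le_power[of "4 * X" d] by linarith
  have bound: "norm (poly p (sigma x hs)) \<le> B"
    if "degree p \<le> d" "Mp p \<le> Mp q * F ^ s" "x \<in> D" "j \<le> s" "hs \<in> gbox_pow X j" for p x j hs
  proof -
    have "norm (poly p (sigma x hs)) \<le> (real d + 1) * (Mp p / 2) * ((2 * real d + 2) * Y) ^ d"
      using that Y X_ge_1 \<open>s < d\<close> by (intro norm_poly_sigma_le[where j = j]) auto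
    also have "\<dots> \<le> B"
      unfolding B_def using that(2) Mp_nonneg[of p] Mp_nonneg[of q] \<open>1 \<le> F\<close> X_ge_1 Y(1)
      by (intro mult_mono) auto
    finally show ?thesis .
  qed
  have growth: "Mp (difference_poly p h1 h2) \<le> F * Mp p"
    if "degree p \<le> d" "h1 \<in> gbox X" "h2 \<in> gbox X" for p h1 h2
    unfolding F_def using Mp_difference_poly_gbox_le[OF X_ge_1 that] .
  have "\<exists>p. gauss_poly p \<and> degree p = 1 \<and> Mp p \<le> Mp q * F ^ s \<and> corr_threshold \<delta> d \<le> \<bar>corr 0 p\<bar>"
    using descend_degree[OF \<open>1 \<le> F\<close> Mp_nonneg \<open>s < d\<close> \<open>\<delta> \<le> 1\<close> bound growth err_B, where k = s and q = q]
      q corr_q by simp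
  then obtain p where p: "gauss_poly p" "degree p = 1" "Mp p \<le> Mp q * F ^ s"
      "corr_threshold \<delta> d \<le> \<bar>corr 0 p\<bar>"
    by blast
  have "Mp p \<le> 2 ^ (d * (2 * d + 1)) * Mp q * X ^ d\<^sup>2"
    using p(3) mult_left_mono[OF growth_power_le[OF X_ge_1 \<open>s < d\<close>] Mp_nonneg[of q]]
    unfolding F_def by (simp add: mult_ac)
  moreover have "0 < Mp p" using p(2) by (intro Mp_pos) auto
  ultimately show ?thesis using p by (auto simp: corr_0)
qed

end

lemma density_le_1:
  assumes "A \<subseteq> gbox N" "0 < N"
  shows "real (card A) / real N ^ 2 \<le> 1"
proof -
  have "card A \<le> N\<^sup>2" using card_mono[OF _ assms(1)] by (simp add: card_gbox)
  then have "real (card A) \<le> real N ^ 2" by (metis of_nat_le_iff of_nat_power)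
  then show ?thesis using assms(2) by simp
qed

lemma correlation_setting_balanced_fn:
  assumes A: "A \<subseteq> gbox N" "A \<noteq> {}" and N: "0 < N"
    and D: "finite D" "D \<noteq> {}" "D \<subseteq> gauss_int" and X: "1 \<le> X"
  shows "correlation_setting (balanced_fn A N) N (card A / N\<^sup>2) D X"
proof
  define \<delta> where "\<delta> = real (card A) / real N ^ 2"
  define G where "G = gbox N"
  have card_G: "card G = N\<^sup>2" unfolding G_def by (simp add: card_gbox)
  have \<delta>_le: "\<delta> \<le> 1" unfolding \<delta>_def using density_le_1[OF A(1) N] .
  have \<delta>_ge: "0 \<le> \<delta>" unfolding \<delta>_def by simp
  have "finite A" using A(1) by (rule finite_subset) simp
  then show "0 < card A / real N ^ 2" using A(2) N by (simp add: card_gt_0_iff)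
  show "balanced_fn A N z = 0" if "z \<notin> gbox N" for z
    using A that unfolding balanced_fn_def by (auto simp: indicator_def)
  show "\<bar>balanced_fn A N z\<bar> \<le> 1" for z
    using \<delta>_le \<delta>_ge unfolding balanced_fn_def \<delta>_def[symmetric]
    by (cases "z \<in> A"; cases "z \<in> gbox N") (auto simp: indicator_def)
  have "avg G (\<lambda>n. (balanced_fn A N n)\<^sup>2) = avg G (\<lambda>n. (1 - 2 * \<delta>) * indicator A n + \<delta>\<^sup>2)"
    unfolding G_def balanced_fn_def \<delta>_def[symmetric]
    by (intro avg_cong) (auto simp: indicator_def power2_eq_square algebra_simps)
  also have "\<dots> = (1 - 2 * \<delta>) * avg G (indicator A) + \<delta>\<^sup>2"
    using gbox_nonempty[of "real N"] N unfolding G_def by (simp add: avg_add_const avg_mult_left)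
  also have "avg G (indicator A) = \<delta>"
    using A(1) unfolding avg_def card_G \<delta>_def
    by (simp add: G_def indicator_def sum.If_cases Int_absorb1)
  finally have "avg G (\<lambda>n. (balanced_fn A N n)\<^sup>2) = \<delta> - \<delta>\<^sup>2"
    by (simp add: power2_eq_square algebra_simps)
  then show "avg (gbox N) (\<lambda>n. (balanced_fn A N n)\<^sup>2) \<le> card A / real N ^ 2"
    using zero_le_power2[of \<delta>] unfolding G_def \<delta>_def by linarith
qed (use N D X in auto)

section \<open>Choice of the parameters\<close>

lemma diagonal_error_le:
  assumes "0 < \<delta>0" "\<delta>0 \<le> \<delta>" "\<delta> \<le> 1" "1 \<le> X"
    and X: "2 ^ (3 * 2 ^ (d - 1) - 1) / \<delta>0 ^ (2 ^ (d - 1) + 1) \<le> X\<^sup>2"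
  shows "\<delta> / card (gbox X) \<le> 2 * corr_threshold \<delta> d"
proof -
  define e :: nat where "e = 2 ^ (d - 1) + 1"
  define t :: nat where "t = 3 * 2 ^ (d - 1)"
  have "2 \<le> t" unfolding t_def using one_le_power[of "2::nat" "d - 1"] by linarith
  then have "t - 1 = Suc (t - 2)" by simp
  then have two_pow: "(2::real) ^ (t - 1) = 2 * 2 ^ (t - 2)" by simp
  have pos: "0 < 2 ^ (t - 1) / \<delta>0 ^ e" using assms by simp
  have "2 ^ (t - 1) / \<delta>0 ^ e / 4 \<le> card (gbox X)"
    using divide_right_mono[OF X, of 4] card_gbox_ge[OF \<open>1 \<le> X\<close>] unfolding e_def t_def
    by linarith
  then have "\<delta> / card (gbox X) \<le> \<delta> / (2 ^ (t - 1) / \<delta>0 ^ e / 4)"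
    using pos assms gbox_nonempty[OF \<open>1 \<le> X\<close>] by (intro divide_left_mono) (auto simp: card_gt_0_iff)
  also have "\<dots> = 4 * (\<delta> * \<delta>0 ^ e) / 2 ^ (t - 1)" using assms by (simp add: field_simps)
  also have "\<dots> \<le> 4 * \<delta> ^ e / 2 ^ (t - 1)"
    using assms mult_mono[of \<delta> 1 "\<delta>0 ^ e" "\<delta> ^ e"] power_mono[of \<delta>0 \<delta> e]
    by (intro divide_right_mono) auto
  also have "\<dots> = 2 * corr_threshold \<delta> d"
    unfolding two_pow unfolding corr_threshold_def e_def t_def by simp
  finally show ?thesis .
qed

lemma boundary_constant_le:
  assumes "0 < \<delta>0" "\<delta>0 \<le> \<delta>" "2 \<le> M"
  shows "(real d + 1) * (2 * real d + 2) ^ d * 2 ^ (d * (2 * d + 1)) * M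
    \<le> corr_threshold \<delta> d * (2 ^ (3 * 2 ^ (d - 1)) * real (2 * d + 2) ^ (2 * d + 2)
         * 2 ^ (2 * d * (2 * d + 1)) * M\<^sup>2 / \<delta>0 ^ (2 ^ (d - 1) + 1))"
proof -
  define P :: real where "P = 2 ^ (d * (2 * d + 1))"
  define W where "W = (2 * real d + 2) ^ (2 * d + 2) * P\<^sup>2 * M\<^sup>2"
  define e :: nat where "e = 2 ^ (d - 1) + 1"
  define t :: nat where "t = 3 * 2 ^ (d - 1)"
  have "1 \<le> P" unfolding P_def by simp
  have "(real d + 1) * (2 * real d + 2) ^ d \<le> (2 * real d + 2) ^ Suc d" by simp
  also have "\<dots> \<le> (2 * real d + 2) ^ (2 * d + 2)" by (intro power_increasing) auto
  finally have "(real d + 1) * (2 * real d + 2) ^ d * P * M \<le> W"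
    unfolding W_def using \<open>1 \<le> P\<close> \<open>2 \<le> M\<close>
    by (intro mult_mono) (auto simp: power2_eq_square)
  also have "W \<le> 4 * (\<delta> ^ e / \<delta>0 ^ e) * W"
  proof -
    have "1 \<le> \<delta> ^ e / \<delta>0 ^ e" using assms power_mono[of \<delta>0 \<delta> e] by simp
    moreover have "0 \<le> W" unfolding W_def by simp
    ultimately show ?thesis using mult_right_mono[of 1 "4 * (\<delta> ^ e / \<delta>0 ^ e)" W] by simp
  qed
  also have "\<dots> = corr_threshold \<delta> d * (2 ^ t * real (2 * d + 2) ^ (2 * d + 2)
      * 2 ^ (2 * d * (2 * d + 1)) * M\<^sup>2 / \<delta>0 ^ e)"
  proof -
    have "2 \<le> t" unfolding t_def using one_le_power[of "2::nat" "d - 1"] by linarith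
    then have "(2::real) ^ t = 2\<^sup>2 * 2 ^ (t - 2)"
      by (metis le_add_diff_inverse power_add)
    moreover have "(2::real) ^ (2 * d * (2 * d + 1)) = P\<^sup>2"
      unfolding P_def by (simp add: power_mult[symmetric] mult.commute mult.left_commute)
    ultimately show ?thesis
      unfolding corr_threshold_def W_def e_def[symmetric] t_def[symmetric] by (simp add: add.commute)
  qed
  finally show ?thesis unfolding P_def e_def t_def .
qed

lemma boundary_error_le:
  assumes X: "1 \<le> X" and "s < d" "d\<^sup>2 \<le> L" "0 < \<delta>0" "\<delta>0 \<le> \<delta>" "2 \<le> M"
    and Y: "((2 * real d + 2) * Y) ^ d = (2 * real d + 2) ^ d * X ^ (4 * L)"
    and Z: "2 ^ (3 * 2 ^ (d - 1)) * real (2 * d + 2) ^ (2 * d + 2) * 2 ^ (2 * d * (2 * d + 1))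
              * M\<^sup>2 / \<delta>0 ^ (2 ^ (d - 1) + 1) \<le> X ^ (2 * L)"
  shows "(real d + 1) * M * (2 * (4 * X) ^ d) ^ s * ((2 * real d + 2) * Y) ^ d
           \<le> corr_threshold \<delta> d * X ^ (8 * L)"
proof -
  define K where "K = (real d + 1) * (2 * real d + 2) ^ d * 2 ^ (d * (2 * d + 1)) * M"
  have "K \<le> corr_threshold \<delta> d * X ^ (2 * L)"
    using boundary_constant_le[OF assms(4-6), of d] Z corr_threshold_pos[of \<delta> d] assms(4,5)
    unfolding K_def by (smt (verit) mult_left_mono)
  have "(real d + 1) * M * (2 * (4 * X) ^ d) ^ s * ((2 * real d + 2) * Y) ^ d
      \<le> (real d + 1) * M * (2 ^ (d * (2 * d + 1)) * X ^ d\<^sup>2) * ((2 * real d + 2) ^ d * X ^ (4 * L))"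
    unfolding Y using growth_power_le[OF X \<open>s < d\<close>] \<open>2 \<le> M\<close> X
    by (intro mult_mono) auto
  also have "\<dots> = K * (X ^ d\<^sup>2 * X ^ (4 * L))"
    unfolding K_def by (simp add: algebra_simps)
  also have "\<dots> \<le> K * X ^ (6 * L)"
    using X \<open>d\<^sup>2 \<le> L\<close> \<open>2 \<le> M\<close> unfolding K_def
    by (intro mult_left_mono) (auto simp flip: power_add intro!: power_increasing)
  also have "\<dots> \<le> corr_threshold \<delta> d * X ^ (2 * L) * X ^ (6 * L)"
    using \<open>K \<le> _\<close> X by (intro mult_right_mono) auto
  also have "\<dots> = corr_threshold \<delta> d * X ^ (8 * L)"
    by (simp flip: power_add mult.assoc)
  finally show ?thesis .
qed

lemma le_of_ceiling_power_le:
  fixes x y :: real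
  assumes "nat \<lceil>y ^ k\<rceil> \<le> n" "real n = x ^ k" "0 \<le> x" "0 \<le> y" "0 < k"
  shows "y \<le> x"
proof -
  have "y ^ k \<le> x ^ k" using assms(1,2) by linarith
  then show ?thesis using assms(3-5) power_mono_iff[of y x k] by blast
qed

lemma error_terms_le:
  fixes X \<delta> \<delta>0 M :: real and N :: nat
  assumes "1 \<le> d" "2 \<le> r" "s < d" "0 < \<delta>0" "\<delta>0 \<le> \<delta>" "\<delta> \<le> 1" "2 \<le> M" "1 \<le> X"
    and N: "real N = X ^ (8 * d ^ r)"
    and N_ge_diag: "nat \<lceil>((2::real) ^ (3 * 2 ^ (d - 1) - 1) / \<delta>0 ^ (2 ^ (d - 1) + 1)) ^ (4 * d ^ r)\<rceil> \<le> N"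
    and N_ge_boundary: "nat \<lceil>((2::real) ^ (3 * 2 ^ (d - 1)) * real (2 * d + 2) ^ (2 * d + 2)
                  * 2 ^ (2 * d * (2 * d + 1)) * M\<^sup>2 / \<delta>0 ^ (2 ^ (d - 1) + 1)) ^ 4\<rceil> \<le> N"
  shows "\<delta> / card (gbox X) + (real d + 1) * M * (2 * (4 * X) ^ d) ^ s
           * ((2 * real d + 2) * X ^ (4 * d ^ (r - 1))) ^ d / N \<le> 3 * corr_threshold \<delta> d"
proof -
  define L where "L = d ^ r"
  have "0 < L" "d\<^sup>2 \<le> L" unfolding L_def using assms(1,2) by (auto intro: power_increasing)
  have "r = Suc (r - 1)" using assms(2) by simp
  then have "d ^ r = d ^ (r - 1) * d" by (metis power_Suc2)
  then have Y: "((2 * real d + 2) * X ^ (4 * d ^ (r - 1))) ^ d = (2 * real d + 2) ^ d * X ^ (4 * L)"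
    unfolding L_def by (simp add: power_mult_distrib mult.assoc flip: power_mult)
  have "real N = (X\<^sup>2) ^ (4 * L)" "real N = (X ^ (2 * L)) ^ 4"
    unfolding N L_def by (simp_all flip: power_mult)
  then have diag: "(2::real) ^ (3 * 2 ^ (d - 1) - 1) / \<delta>0 ^ (2 ^ (d - 1) + 1) \<le> X\<^sup>2"
    and boundary: "(2::real) ^ (3 * 2 ^ (d - 1)) * real (2 * d + 2) ^ (2 * d + 2) * 2 ^ (2 * d * (2 * d + 1))
           * M\<^sup>2 / \<delta>0 ^ (2 ^ (d - 1) + 1) \<le> X ^ (2 * L)"
    by (intro le_of_ceiling_power_le[OF N_ge_diag[folded L_def]] le_of_ceiling_power_le[OF N_ge_boundary];
        use \<open>0 < L\<close> assms(4) in simp)+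
  have "\<delta> / card (gbox X) \<le> 2 * corr_threshold \<delta> d"
    by (rule diagonal_error_le[OF assms(4,5,6,8) diag])
  moreover have "(real d + 1) * M * (2 * (4 * X) ^ d) ^ s * ((2 * real d + 2) * X ^ (4 * d ^ (r - 1))) ^ d
      / N \<le> corr_threshold \<delta> d * X ^ (8 * L) / N"
    by (intro divide_right_mono boundary_error_le[OF assms(8,3) \<open>d\<^sup>2 \<le> L\<close> assms(4,5,7) Y boundary]) simp
  moreover have "corr_threshold \<delta> d * X ^ (8 * L) / N = corr_threshold \<delta> d"
    using assms(8) unfolding N L_def by simp
  ultimately show ?thesis by linarith
qed

lemma root_scale_powers:
  fixes N :: nat
  assumes "0 < N" "1 \<le> d" "2 \<le> r"
  defines "X \<equiv> real N powr (1 / (8 * real d ^ r))"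
  shows "1 \<le> X" and "real N = X ^ (8 * d ^ r)"
    and "real N powr (1 / (2 * real d)) = X ^ (4 * d ^ (r - 1))"
    and "real N powr (1 / (8 * real d ^ (r - 2))) = X ^ d\<^sup>2"
proof -
  have X_pow: "X ^ k = real N powr (real k / (8 * real d ^ r))" for k
    unfolding X_def using assms(1) by (simp add: powr_power)
  show "1 \<le> X" unfolding X_def using assms(1) by (intro ge_one_powr_ge_zero) auto
  have "r = Suc (r - 1)" "r = 2 + (r - 2)" using assms(3) by auto
  then have dr: "real d ^ r = real d * real d ^ (r - 1)" "real d ^ r = real d ^ 2 * real d ^ (r - 2)"
    by (metis power_Suc, metis power_add)
  have "real (8 * d ^ r) / (8 * real d ^ r) = 1" using assms(2) by simp
  then show "real N = X ^ (8 * d ^ r)" unfolding X_pow by simp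
  have "real (4 * d ^ (r - 1)) / (8 * real d ^ r) = 1 / (2 * real d)"
    unfolding dr(1) using assms(2) by simp
  then show "real N powr (1 / (2 * real d)) = X ^ (4 * d ^ (r - 1))" unfolding X_pow by simp
  have "real (d\<^sup>2) / (8 * real d ^ r) = 1 / (8 * real d ^ (r - 2))"
    unfolding dr(2) using assms(2) by simp
  then show "real N powr (1 / (8 * real d ^ (r - 2))) = X ^ d\<^sup>2" unfolding X_pow by simp
qed

theorem mainTheorem5:
  fixes d r m N Nm :: nat and \<delta>0 :: real and pm :: "complex poly"
    and A D :: "complex set"
  assumes "d \<ge> 1" and "r \<ge> 4" and "0 < \<delta>0" and "\<delta>0 < 1"
    and "1 \<le> m" and "m \<le> d"
    and "gauss_poly pm" and "degree pm = d - m + 1"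
    and "N > 0" and "Nm > 0" and "N \<ge> Nm"
    and "A \<subseteq> gbox (real N)"
    and "real (card A) / real N ^ 2 \<ge> \<delta>0"
    and "D \<noteq> {}" and "D \<subseteq> gbox (2 * real N powr (1 / (2 * real d)))"
    and "\<bar>avg (gbox (real N)) (\<lambda>n. avg D (\<lambda>x.
            avg (gbox_pow (real N powr (1 / (8 * real d ^ r))) (d - m)) (\<lambda>hs.
              balanced_fn A N n * balanced_fn A N (n + poly pm (sigma x hs)))))\<bar>
         \<ge> (real (card A) / real N ^ 2) ^ (2 ^ (m - 1) + 1) / 2 ^ (3 * 2 ^ (m - 1) - 2)"
    and "N \<ge> max Nm (max
          (nat \<lceil>((2::real) ^ (3 * 2 ^ (d - 1) - 1) / \<delta>0 ^ (2 ^ (d - 1) + 1)) ^ (4 * d ^ r)\<rceil>)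
          (nat \<lceil>((2::real) ^ (3 * 2 ^ (d - 1)) * real (2 * d + 2) ^ (2 * d + 2)
                  * 2 ^ (2 * d * (2 * d + 1)) * Mp pm ^ 2 / \<delta>0 ^ (2 ^ (d - 1) + 1)) ^ 4\<rceil>))"
  shows "\<exists>pd. gauss_poly pd \<and> degree pd = 1 \<and> 0 < Mp pd \<and>
           Mp pd \<le> 2 ^ (d * (2 * d + 1)) * Mp pm * real N powr (1 / (8 * real d ^ (r - 2))) \<and>
           \<bar>avg (gbox (real N)) (\<lambda>n. avg D (\<lambda>x.
              balanced_fn A N n * balanced_fn A N (n + poly pd x)))\<bar>
           \<ge> (real (card A) / real N ^ 2) ^ (2 ^ (d - 1) + 1) / 2 ^ (3 * 2 ^ (d - 1) - 2)"
proof -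
  define \<delta> where "\<delta> = real (card A) / real N ^ 2"
  define X where "X = real N powr (1 / (8 * real d ^ r))"
  define Y where "Y = X ^ (4 * d ^ (r - 1))"
  have "1 \<le> X" and N_eq: "real N = X ^ (8 * d ^ r)" and Y_eq: "real N powr (1 / (2 * real d)) = Y"
    and final_eq: "real N powr (1 / (8 * real d ^ (r - 2))) = X ^ d\<^sup>2"
    unfolding X_def Y_def using root_scale_powers[OF assms(9,1)] assms(2) by auto
  interpret correlation_setting "balanced_fn A N" N \<delta> D X
    unfolding \<delta>_def using assms(3,9,12-15) \<open>1 \<le> X\<close> gbox_subset_gauss_int
    by (intro correlation_setting_balanced_fn) (auto intro: finite_subset)
  have "\<delta>0 \<le> \<delta>" "\<delta> \<le> 1" unfolding \<delta>_def using assms(13) density_le_1[OF assms(12,9)] by auto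
  have "2 \<le> Mp pm" using Mp_ge_2[OF assms(7)] assms(8) by fastforce
  have "X \<le> Y" unfolding Y_def using \<open>1 \<le> X\<close> power_increasing[of 1 "4 * d ^ (r - 1)" X] assms(1) by simp
  have err: "\<delta> / card (gbox X) + (real d + 1) * Mp pm * (2 * (4 * X) ^ d) ^ (d - m)
      * ((2 * real d + 2) * Y) ^ d / N \<le> 3 * corr_threshold \<delta> d"
    unfolding Y_def using assms(17) assms(1-6)
    by (intro error_terms_le[OF _ _ _ _ \<open>\<delta>0 \<le> \<delta>\<close> \<open>\<delta> \<le> 1\<close> \<open>2 \<le> Mp pm\<close> \<open>1 \<le> X\<close> N_eq]) auto
  have "corr_threshold \<delta> (d - (d - m)) \<le> \<bar>corr (d - m) pm\<bar>"
    using assms(6,16) unfolding corr_threshold_def corr_def unfolding X_def \<delta>_def by simp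
  then show ?thesis
    using descend_to_linear[OF _ \<open>\<delta> \<le> 1\<close> assms(7) _ _ \<open>X \<le> Y\<close> _ err] assms(1,5,6,8,15) Y_eq final_eq
    unfolding corr_threshold_def \<delta>_def by auto
qed

end
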